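(* Let $R$ be a commutative ring with $1$, $n\ge1$, and $\phi$ an $R$-algebra endomorphism of $R^{[2n]}=R[X_1,\ldots,X_{2n}]$. Then $\phi$ is symplectic if and only if $\phi$ is an endomorphism of the Poisson algebra $P_n(R)$. If moreover one of these holds and $n!$ is invertible in $R$, then $\det(J\phi)=1$, where $J\phi=\left(\frac{\partial\phi(X_i)}{\partial X_j}\right)_{1\le i,j\le 2n}$.
   Context: The Poisson bracket on $R^{[2n]}$ is $\{f,g\}=\sum_{i=1}^n\left(\frac{\partial f}{\partial X_i}\frac{\partial g}{\partial X_{i+n}}-\frac{\partial f}{\partial X_{i+n}}\frac{\partial g}{\partial X_i}\right)$; $P_n(R)$ is $R^{[2n]}$ with this bracket, and an endomorphism of $P_n(R)$ is an $R$-algebra endomorphism $\phi$ with $\{\phi(f),\phi(g)\}=\{f,g\}$ for all $f,g$. Let $E=(R^{[2n]})^{2n}$ with canonical basis $(e_1,\ldots,e_{2n})$ and dual basis $(e_i^* )$, and $\omega=\sum_{i=1}^n e_i^*\wedge e_{i+n}^*$. For $\phi$ let $L_\phi$ be the $R^{[2n]}$-linear endomorphism of $E$ with $L_\phi(e_p)=\sum_{j}\frac{\partial\phi(X_p)}{\partial X_j}e_j$. $\phi$ is symplectic if $\omega\circ(L_\phi,L_\phi)=\omega$. *)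

theory Defs
  imports "HOL-Library.Poly_Mapping" "Jordan_Normal_Form.Determinant"
begin

text \<open>Polynomials in the variables X_0, X_1, ... (0-indexed) with coefficients in 'a:
  finitely supported maps from monomials (exponent vectors) to coefficients.
  R^[2n] is the subring of those polynomials only involving X_0, ..., X_(2n-1).\<close>

type_synonym 'a mpoly = "(nat \<Rightarrow>\<^sub>0 nat) \<Rightarrow>\<^sub>0 'a"

definition polyring :: "nat \<Rightarrow> ('a::comm_ring_1) mpoly set" where
  "polyring N = {f. \<forall>m \<in> Poly_Mapping.keys f. Poly_Mapping.keys m \<subseteq> {..<N}}"

definition Var :: "nat \<Rightarrow> ('a::comm_ring_1) mpoly" where
  "Var i = Poly_Mapping.single (Poly_Mapping.single i 1) 1"

definition Const :: "'a::comm_ring_1 \<Rightarrow> 'a mpoly" where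
  "Const c = Poly_Mapping.single 0 c"

definition pd :: "nat \<Rightarrow> ('a::comm_ring_1) mpoly \<Rightarrow> 'a mpoly" where
  "pd i f = (\<Sum>m \<in> Poly_Mapping.keys f.
      Poly_Mapping.single (m - Poly_Mapping.single i 1)
        (of_nat (Poly_Mapping.lookup m i) * Poly_Mapping.lookup f m))"

definition bracket :: "nat \<Rightarrow> ('a::comm_ring_1) mpoly \<Rightarrow> 'a mpoly \<Rightarrow> 'a mpoly" where
  "bracket n f g = (\<Sum>i<n. pd i f * pd (i+n) g - pd (i+n) f * pd i g)"

definition alg_endo :: "nat \<Rightarrow> (('a::comm_ring_1) mpoly \<Rightarrow> 'a mpoly) \<Rightarrow> bool" where
  "alg_endo n \<phi> \<longleftrightarrow>
     (\<forall>f \<in> polyring (2*n). \<phi> f \<in> polyring (2*n)) \<and>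
     (\<forall>f \<in> polyring (2*n). \<forall>g \<in> polyring (2*n). \<phi> (f + g) = \<phi> f + \<phi> g) \<and>
     (\<forall>f \<in> polyring (2*n). \<forall>g \<in> polyring (2*n). \<phi> (f * g) = \<phi> f * \<phi> g) \<and>
     \<phi> 1 = 1 \<and>
     (\<forall>c. \<forall>f \<in> polyring (2*n). \<phi> (Const c * f) = Const c * \<phi> f)"

definition poisson_endo :: "nat \<Rightarrow> (('a::comm_ring_1) mpoly \<Rightarrow> 'a mpoly) \<Rightarrow> bool" where
  "poisson_endo n \<phi> \<longleftrightarrow> alg_endo n \<phi> \<and>
     (\<forall>f \<in> polyring (2*n). \<forall>g \<in> polyring (2*n).
        bracket n (\<phi> f) (\<phi> g) = \<phi> (bracket n f g))"

text \<open>Elements of E = (R^[2n])^(2n) are represented by functions nat => mpoly whose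
  entries (at indices < 2n) lie in R^[2n]; only indices < 2n matter.\<close>
definition Evec :: "nat \<Rightarrow> (nat \<Rightarrow> ('a::comm_ring_1) mpoly) set" where
  "Evec n = {u. \<forall>i < 2*n. u i \<in> polyring (2*n)}"

text \<open>omega = sum_(i<n) e_i^* wedge e_(i+n)^*.\<close>
definition omega :: "nat \<Rightarrow> (nat \<Rightarrow> ('a::comm_ring_1) mpoly) \<Rightarrow> (nat \<Rightarrow> 'a mpoly) \<Rightarrow> 'a mpoly" where
  "omega n u v = (\<Sum>i<n. u i * v (i+n) - u (i+n) * v i)"

text \<open>L_phi(e_p) = sum_j d phi(X_p)/d X_j e_j, extended R^[2n]-linearly.\<close>
definition Lphi :: "nat \<Rightarrow> (('a::comm_ring_1) mpoly \<Rightarrow> 'a mpoly) \<Rightarrow> (nat \<Rightarrow> 'a mpoly) \<Rightarrow> (nat \<Rightarrow> 'a mpoly)" where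
  "Lphi n \<phi> u = (\<lambda>j. if j < 2*n then (\<Sum>p<2*n. u p * pd j (\<phi> (Var p))) else 0)"

definition symplectic :: "nat \<Rightarrow> (('a::comm_ring_1) mpoly \<Rightarrow> 'a mpoly) \<Rightarrow> bool" where
  "symplectic n \<phi> \<longleftrightarrow>
     (\<forall>u \<in> Evec n. \<forall>v \<in> Evec n. omega n (Lphi n \<phi> u) (Lphi n \<phi> v) = omega n u v)"

definition jac :: "nat \<Rightarrow> (('a::comm_ring_1) mpoly \<Rightarrow> 'a mpoly) \<Rightarrow> 'a mpoly mat" where
  "jac n \<phi> = mat (2*n) (2*n) (\<lambda>(i,j). pd j (\<phi> (Var i)))"

end

(*
  The chain rule reads: the gradient of phi f is L_phi applied to phi of the gradient of f.
  Since {f, g} = omega (grad f) (grad g) and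
  omega (L_phi u) (L_phi v) = sum_(p,q) u_p v_q {phi X_p, phi X_q},
  being symplectic and being a Poisson endomorphism are both equivalent to preserving
  the canonical brackets {X_p, X_q}.

  For the determinant let J be the Jacobian and x_ab = sum_(c<n) J_(a,c) J_(b,c+n), so that
  {phi X_a, phi X_b} = x_ab - x_ba. The alternating pairing sum
  P(Y) = sum_sigma sgn sigma * prod_(i<n) Y (sigma i) (sigma (i+n)) satisfies
  P(Y - Y^T) = 2^n P(Y) and, a Pfaffian-type identity, P(x) = n! det J. Comparing phi with
  the identity gives 2^n n! det J = 2^n n!, and for n >= 2 the factor 2^n n! is a unit because
  2 divides n!.
*)

theory Submission
  imports Defs
begin

section \<open>Formal partial derivatives\<close>

lemma pd_eq_sum_superset:
  assumes "finite K" "Poly_Mapping.keys f \<subseteq> K"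
  shows "pd i f = (\<Sum>m\<in>K. Poly_Mapping.single (m - Poly_Mapping.single i 1)
        (of_nat (Poly_Mapping.lookup m i) * Poly_Mapping.lookup f m))"
  unfolding pd_def
  by (rule sum.mono_neutral_left) (use assms in \<open>auto simp: in_keys_iff\<close>)

lemma pd_add: "pd i (f + g) = pd i f + pd i g"
proof -
  let ?K = "Poly_Mapping.keys f \<union> Poly_Mapping.keys g"
  have "Poly_Mapping.keys (f + g) \<subseteq> ?K" by (rule keys_add)
  then show ?thesis
    by (simp add: pd_eq_sum_superset[of ?K f] pd_eq_sum_superset[of ?K g]
        pd_eq_sum_superset[of ?K "f + g"] lookup_add distrib_left single_add sum.distrib)
qed

lemma pd_zero [simp]: "pd i 0 = 0"
  by (simp add: pd_def)

lemma pd_sum: "pd i (sum h S) = (\<Sum>x\<in>S. pd i (h x))"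
  by (induction S rule: infinite_finite_induct) (auto simp: pd_add)

lemma pd_single: "pd i (Poly_Mapping.single m a) =
   Poly_Mapping.single (m - Poly_Mapping.single i 1) (of_nat (Poly_Mapping.lookup m i) * a)"
  by (simp add: pd_eq_sum_superset[of "{m}"])

lemma pd_Var: "pd i (Var p) = of_bool (i = p)"
  unfolding Var_def pd_single by (auto simp: lookup_single)

lemma pd_Const: "pd i (Const c) = 0"
  unfolding Const_def pd_single by simp

(* When X_i does not divide m the coefficient vanishes, so the truncated subtraction is harmless. *)
lemma single_diff_add_eq:
  fixes c :: "'a::comm_ring_1"
  shows "Poly_Mapping.single (m - Poly_Mapping.single i 1 + m')
      (of_nat (Poly_Mapping.lookup m i) * c) =
    Poly_Mapping.single (m + m' - Poly_Mapping.single i 1) (of_nat (Poly_Mapping.lookup m i) * c)"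
proof (cases "Poly_Mapping.lookup m i = 0")
  case False
  then have "m - Poly_Mapping.single i 1 + m' = m + m' - Poly_Mapping.single i 1"
    by (intro poly_mapping_eqI) (auto simp: lookup_add lookup_minus lookup_single when_def)
  then show ?thesis by simp
qed simp

lemma pd_mult_single:
  fixes a b :: "'a::comm_ring_1"
  shows "pd i (Poly_Mapping.single m a * Poly_Mapping.single m' b) =
    pd i (Poly_Mapping.single m a) * Poly_Mapping.single m' b +
    Poly_Mapping.single m a * pd i (Poly_Mapping.single m' b)"
  using single_diff_add_eq[of m i m' "a * b"] single_diff_add_eq[of m' i m "a * b"]
  by (simp add: pd_single mult_single lookup_add single_add algebra_simps)

lemma poly_mapping_sum_single:
  "f = (\<Sum>m\<in>Poly_Mapping.keys f. Poly_Mapping.single m (Poly_Mapping.lookup f m))"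
  by (rule poly_mapping_eqI) (auto simp: lookup_sum lookup_single when_def in_keys_iff)

lemma pd_mult: "pd i (f * g) = pd i f * g + f * pd i (g :: 'a::comm_ring_1 mpoly)"
proof -
  let ?s = "\<lambda>h m. Poly_Mapping.single m (Poly_Mapping.lookup h m)"
  have "f * g = (\<Sum>m\<in>Poly_Mapping.keys f. \<Sum>m'\<in>Poly_Mapping.keys g. ?s f m * ?s g m')"
    by (subst poly_mapping_sum_single[of f], subst poly_mapping_sum_single[of g]) (rule sum_product)
  then have "pd i (f * g) = (\<Sum>m\<in>Poly_Mapping.keys f. \<Sum>m'\<in>Poly_Mapping.keys g.
       pd i (?s f m) * ?s g m' + ?s f m * pd i (?s g m'))"
    by (simp only: pd_sum pd_mult_single)
  also have "\<dots> = (\<Sum>m\<in>Poly_Mapping.keys f. pd i (?s f m)) * (\<Sum>m'\<in>Poly_Mapping.keys g. ?s g m')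
     + (\<Sum>m\<in>Poly_Mapping.keys f. ?s f m) * (\<Sum>m'\<in>Poly_Mapping.keys g. pd i (?s g m'))"
    by (simp add: sum.distrib sum_product)
  also have "\<dots> = pd i f * g + f * pd i g"
    by (simp flip: pd_sum poly_mapping_sum_single)
  finally show ?thesis .
qed

section \<open>Polynomials in the first N variables\<close>

lemma polyring_add: "f \<in> polyring N \<Longrightarrow> g \<in> polyring N \<Longrightarrow> f + g \<in> polyring N"
  unfolding polyring_def using keys_add[of f g] by blast

lemma polyring_uminus: "f \<in> polyring N \<Longrightarrow> - f \<in> polyring N"
  unfolding polyring_def by (simp add: keys_def)

lemma polyring_diff: "f \<in> polyring N \<Longrightarrow> g \<in> polyring N \<Longrightarrow> f - g \<in> polyring N"
  using polyring_add[OF _ polyring_uminus] by (metis diff_conv_add_uminus)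

lemma polyring_mult:
  assumes "f \<in> polyring N" "g \<in> polyring N"
  shows "f * g \<in> polyring N"
  unfolding polyring_def mem_Collect_eq
proof (intro ballI)
  fix m assume "m \<in> Poly_Mapping.keys (f * g)"
  then obtain a b where "m = a + b" "a \<in> Poly_Mapping.keys f" "b \<in> Poly_Mapping.keys g"
    using keys_mult[of f g] by blast
  then show "Poly_Mapping.keys m \<subseteq> {..<N}"
    using assms keys_add[of a b] unfolding polyring_def by blast
qed

lemma polyring_single: "Poly_Mapping.keys m \<subseteq> {..<N} \<Longrightarrow> Poly_Mapping.single m c \<in> polyring N"
  unfolding polyring_def by simp

lemma polyring_zero [simp]: "0 \<in> polyring N"
  unfolding polyring_def by simp

lemma polyring_one [simp]: "1 \<in> polyring N"
  unfolding polyring_def by simp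

lemma polyring_power: "f \<in> polyring N \<Longrightarrow> f ^ k \<in> polyring N"
  by (induction k) (simp_all add: polyring_mult)

lemma polyring_Var: "i < N \<Longrightarrow> Var i \<in> polyring N"
  unfolding polyring_def Var_def by simp

lemma polyring_sum: "(\<And>x. x \<in> S \<Longrightarrow> h x \<in> polyring N) \<Longrightarrow> sum h S \<in> polyring N"
  by (induction S rule: infinite_finite_induct) (auto intro: polyring_add)

lemma polyring_pd: "f \<in> polyring N \<Longrightarrow> pd i f \<in> polyring N"
  unfolding pd_def
proof (rule polyring_sum)
  fix m assume "f \<in> polyring N" "m \<in> Poly_Mapping.keys f"
  then have "Poly_Mapping.keys m \<subseteq> {..<N}" unfolding polyring_def by blast
  moreover have "Poly_Mapping.keys (m - Poly_Mapping.single i 1) \<subseteq> Poly_Mapping.keys m"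
    by (auto simp: in_keys_iff lookup_minus)
  ultimately show "Poly_Mapping.single (m - Poly_Mapping.single i 1)
      (of_nat (Poly_Mapping.lookup m i) * Poly_Mapping.lookup f m) \<in> polyring N"
    by (intro polyring_single) blast
qed

lemma Var_power: "Var i ^ k = Poly_Mapping.single (Poly_Mapping.single i k) 1"
  by (induction k) (simp_all add: Var_def mult_single single_add[symmetric])

lemma update_eq_add_single:
  "a \<notin> Poly_Mapping.keys f \<Longrightarrow> Poly_Mapping.update a b f = f + Poly_Mapping.single a b"
  by (rule poly_mapping_eqI)
    (auto simp: lookup_update lookup_add lookup_single in_keys_iff when_def)

lemma polyring_induct_monomials [consumes 1, case_names monomial add]:
  assumes f: "f \<in> polyring N"
    and P_monomial: "\<And>m c. Poly_Mapping.keys m \<subseteq> {..<N} \<Longrightarrow> P (Poly_Mapping.single m c)"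
    and P_add: "\<And>f g. f \<in> polyring N \<Longrightarrow> g \<in> polyring N \<Longrightarrow> P f \<Longrightarrow> P g \<Longrightarrow> P (f + g)"
  shows "P f"
proof -
  have keys: "Poly_Mapping.keys m \<subseteq> {..<N}" if "m \<in> Poly_Mapping.keys f" for m
    using f that unfolding polyring_def by blast
  have "P (\<Sum>m\<in>M. Poly_Mapping.single m (Poly_Mapping.lookup f m))"
    if "M \<subseteq> Poly_Mapping.keys f" for M
    using that
  proof (induction M rule: infinite_finite_induct)
    case (infinite M)
    then show ?case using P_monomial[of 0 0] by simp
  next
    case empty
    then show ?case using P_monomial[of 0 0] by simp
  next
    case (insert m M)
    then have m: "Poly_Mapping.keys m \<subseteq> {..<N}" and M: "\<And>m'. m' \<in> M \<Longrightarrow> Poly_Mapping.keys m' \<subseteq> {..<N}"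
      using keys by blast+
    have "P (\<Sum>m\<in>M. Poly_Mapping.single m (Poly_Mapping.lookup f m))"
      using insert by blast
    then show ?case
      using P_add[OF polyring_single[OF m] polyring_sum[OF polyring_single[OF M]] P_monomial[OF m]]
        insert.hyps
      by simp
  qed
  then show ?thesis by (subst poly_mapping_sum_single) blast
qed

lemma polyring_induct [consumes 1, case_names Const Var add mult]:
  assumes f: "f \<in> polyring N"
    and P_Const: "\<And>c. P (Const c)"
    and P_Var: "\<And>i. i < N \<Longrightarrow> P (Var i)"
    and P_add: "\<And>f g. f \<in> polyring N \<Longrightarrow> g \<in> polyring N \<Longrightarrow> P f \<Longrightarrow> P g \<Longrightarrow> P (f + g)"
    and P_mult: "\<And>f g. f \<in> polyring N \<Longrightarrow> g \<in> polyring N \<Longrightarrow> P f \<Longrightarrow> P g \<Longrightarrow> P (f * g)"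
  shows "P f"
proof -
  have power: "P (Var i ^ k)" if "i < N" for i k
  proof (induction k)
    case 0
    then show ?case using P_Const[of 1] by (simp add: Const_def)
  next
    case (Suc k)
    then show ?case
      using P_mult[OF polyring_Var[OF that] polyring_power[OF polyring_Var[OF that]] P_Var[OF that]]
      by simp
  qed
  from f show ?thesis
  proof (induction rule: polyring_induct_monomials)
    case (monomial m c)
    then show ?case
    proof (induction m rule: update_induct)
      case const
      then show ?case using P_Const[of c] by (simp add: Const_def)
    next
      case (update m i k)
      then have i: "i < N" and m: "Poly_Mapping.keys m \<subseteq> {..<N}"
        by (auto simp: keys_update)
      have "Poly_Mapping.single (Poly_Mapping.update i k m) c = Poly_Mapping.single m c * Var i ^ k"
        using update.hyps by (simp add: update_eq_add_single Var_power mult_single)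
      then show ?case
        using P_mult[OF polyring_single[OF m] polyring_power[OF polyring_Var[OF i]]
            update.IH[OF m] power[OF i]]
        by simp
    qed
  next
    case (add f g)
    then show ?case by (rule P_add)
  qed
qed

section \<open>Algebra endomorphisms and the chain rule\<close>

context
  fixes n :: nat and \<phi> :: "'a::comm_ring_1 mpoly \<Rightarrow> 'a mpoly"
  assumes endo: "alg_endo n \<phi>"
begin

lemma alg_endo_closed: "f \<in> polyring (2*n) \<Longrightarrow> \<phi> f \<in> polyring (2*n)"
  using endo unfolding alg_endo_def by blast

lemma alg_endo_add: "f \<in> polyring (2*n) \<Longrightarrow> g \<in> polyring (2*n) \<Longrightarrow> \<phi> (f + g) = \<phi> f + \<phi> g"
  using endo unfolding alg_endo_def by blast

lemma alg_endo_mult: "f \<in> polyring (2*n) \<Longrightarrow> g \<in> polyring (2*n) \<Longrightarrow> \<phi> (f * g) = \<phi> f * \<phi> g"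
  using endo unfolding alg_endo_def by blast

lemma alg_endo_Const: "\<phi> (Const c) = Const c"
  using endo polyring_one unfolding alg_endo_def by (metis mult.right_neutral)

lemma alg_endo_zero: "\<phi> 0 = 0"
  using alg_endo_Const[of 0] by (simp add: Const_def)

lemma alg_endo_one: "\<phi> 1 = 1"
  using alg_endo_Const[of 1] by (simp add: Const_def)

lemma alg_endo_of_int: "\<phi> (of_int k) = of_int k"
  using alg_endo_Const[of "of_int k"] by (simp add: Const_def)

lemma alg_endo_diff: "f \<in> polyring (2*n) \<Longrightarrow> g \<in> polyring (2*n) \<Longrightarrow> \<phi> (f - g) = \<phi> f - \<phi> g"
  using alg_endo_add[of "f - g" g] polyring_diff by fastforce

lemma alg_endo_sum:
  "(\<And>x. x \<in> S \<Longrightarrow> h x \<in> polyring (2*n)) \<Longrightarrow> \<phi> (sum h S) = (\<Sum>x\<in>S. \<phi> (h x))"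
  by (induction S rule: infinite_finite_induct)
    (simp_all add: alg_endo_zero alg_endo_add polyring_sum)

lemma chain_rule:
  assumes "f \<in> polyring (2*n)"
  shows "pd j (\<phi> f) = (\<Sum>p<2*n. \<phi> (pd p f) * pd j (\<phi> (Var p)))"
  using assms
proof (induction f rule: polyring_induct)
  case (Const c)
  then show ?case by (simp add: alg_endo_Const pd_Const alg_endo_zero)
next
  case (Var q)
  have "\<phi> (pd p (Var q)) * pd j (\<phi> (Var p)) = (if p = q then pd j (\<phi> (Var q)) else 0)" for p
    by (simp add: pd_Var of_bool_def alg_endo_one alg_endo_zero)
  with Var show ?case by simp
next
  case (add f g)
  then show ?case
    by (simp add: alg_endo_add pd_add polyring_pd sum.distrib distrib_right)
next
  case (mult f g)
  have "pd j (\<phi> (f * g)) = pd j (\<phi> f) * \<phi> g + \<phi> f * pd j (\<phi> g)"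
    by (simp add: alg_endo_mult mult.hyps pd_mult)
  also have "\<dots> = (\<Sum>p<2*n. (\<phi> (pd p f) * \<phi> g + \<phi> f * \<phi> (pd p g)) * pd j (\<phi> (Var p)))"
    by (simp add: mult.IH sum_distrib_left sum_distrib_right sum.distrib algebra_simps)
  also have "\<dots> = (\<Sum>p<2*n. \<phi> (pd p (f * g)) * pd j (\<phi> (Var p)))"
    by (simp add: pd_mult alg_endo_add alg_endo_mult polyring_pd polyring_mult mult.hyps)
  finally show ?case .
qed

end

section \<open>Symplectic maps and Poisson endomorphisms\<close>

lemma omega_cong:
  assumes "\<And>j. j < 2*n \<Longrightarrow> u j = u' j" "\<And>j. j < 2*n \<Longrightarrow> v j = v' j"
  shows "omega n u v = omega n u' v'"
  unfolding omega_def by (intro sum.cong refl) (simp add: assms)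

lemma omega_Lphi:
  "omega n (Lphi n \<phi> u) (Lphi n \<phi> v) =
   (\<Sum>p<2*n. \<Sum>q<2*n. u p * v q * bracket n (\<phi> (Var p)) (\<phi> (Var q)))"
proof -
  define D where "D p j = pd j (\<phi> (Var p))" for p j
  have "omega n (Lphi n \<phi> u) (Lphi n \<phi> v) =
    (\<Sum>i<n. (\<Sum>p<2*n. u p * D p i) * (\<Sum>q<2*n. v q * D q (i+n))
        - (\<Sum>p<2*n. u p * D p (i+n)) * (\<Sum>q<2*n. v q * D q i))"
    unfolding omega_def Lphi_def D_def by (intro sum.cong refl) auto
  also have "\<dots> = (\<Sum>i<n. \<Sum>p<2*n. \<Sum>q<2*n.
      u p * D p i * (v q * D q (i+n)) - u p * D p (i+n) * (v q * D q i))"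
    by (simp add: sum_product sum_subtractf)
  also have "\<dots> = (\<Sum>i<n. \<Sum>p<2*n. \<Sum>q<2*n. u p * v q * (D p i * D q (i+n) - D p (i+n) * D q i))"
    by (intro sum.cong refl) (simp add: algebra_simps)
  also have "\<dots> = (\<Sum>p<2*n. \<Sum>q<2*n. u p * v q * (\<Sum>i<n. D p i * D q (i+n) - D p (i+n) * D q i))"
    by (simp add: sum_distrib_left sum.swap[where A = "{..<n}"])
  finally show ?thesis unfolding bracket_def D_def .
qed

lemma Lphi_id: "j < 2*n \<Longrightarrow> Lphi n (\<lambda>f. f) u j = u j"
  unfolding Lphi_def by (simp add: pd_Var of_bool_def if_distrib[where f = "(*) _"] cong: if_cong)

lemma omega_eq_sum_brackets_Var:
  "omega n u v = (\<Sum>p<2*n. \<Sum>q<2*n. u p * v q * bracket n (Var p) (Var q))"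
proof -
  have "omega n u v = omega n (Lphi n (\<lambda>f. f) u) (Lphi n (\<lambda>f. f) v)"
    by (rule omega_cong) (simp_all add: Lphi_id)
  then show ?thesis by (simp add: omega_Lphi)
qed

definition preserves_canonical_brackets :: "nat \<Rightarrow> ('a::comm_ring_1 mpoly \<Rightarrow> 'a mpoly) \<Rightarrow> bool" where
  "preserves_canonical_brackets n \<phi> \<longleftrightarrow>
     (\<forall>p<2*n. \<forall>q<2*n. bracket n (\<phi> (Var p)) (\<phi> (Var q)) = bracket n (Var p) (Var q))"

lemma symplectic_iff_preserves_canonical_brackets:
  fixes \<phi> :: "'a::comm_ring_1 mpoly \<Rightarrow> 'a mpoly"
  shows "symplectic n \<phi> \<longleftrightarrow> preserves_canonical_brackets n \<phi>"
proof
  assume symp: "symplectic n \<phi>"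
  show "preserves_canonical_brackets n \<phi>"
    unfolding preserves_canonical_brackets_def
  proof (intro allI impI)
    fix p q assume "p < 2*n" "q < 2*n"
    define u where "u k = (of_bool (k = p) :: 'a mpoly)" for k
    define v where "v k = (of_bool (k = q) :: 'a mpoly)" for k
    have "u \<in> Evec n" "v \<in> Evec n"
      unfolding u_def v_def Evec_def by (auto simp: of_bool_def)
    then have "omega n (Lphi n \<phi> u) (Lphi n \<phi> v) = omega n u v"
      using symp unfolding symplectic_def by blast
    then have "(\<Sum>p<2*n. \<Sum>q<2*n. u p * v q * bracket n (\<phi> (Var p)) (\<phi> (Var q))) = omega n u v"
      by (simp only: omega_Lphi)
    then show "bracket n (\<phi> (Var p)) (\<phi> (Var q)) = bracket n (Var p) (Var q)"
      using \<open>p < 2*n\<close> \<open>q < 2*n\<close>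
      by (simp add: omega_eq_sum_brackets_Var u_def v_def mult.assoc flip: sum_distrib_left)
  qed
next
  assume "preserves_canonical_brackets n \<phi>"
  then have "omega n (Lphi n \<phi> u) (Lphi n \<phi> v) = omega n u v" for u v
    unfolding omega_Lphi omega_eq_sum_brackets_Var[of n u v] preserves_canonical_brackets_def
    by (intro sum.cong refl) simp
  then show "symplectic n \<phi>"
    unfolding symplectic_def by blast
qed

lemma bracket_Var_Var_of_int:
  "bracket n (Var p) (Var q) =
     of_int (\<Sum>i<n. of_bool (i = p) * of_bool (i + n = q) - of_bool (i + n = p) * of_bool (i = q))"
  by (simp add: bracket_def pd_Var)

lemma preserves_canonical_brackets_if_poisson_endo:
  assumes "poisson_endo n \<phi>"
  shows "preserves_canonical_brackets n \<phi>"
  unfolding preserves_canonical_brackets_def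
proof (intro allI impI)
  fix p q assume "p < 2*n" "q < 2*n"
  then have "bracket n (\<phi> (Var p)) (\<phi> (Var q)) = \<phi> (bracket n (Var p) (Var q))"
    using assms polyring_Var unfolding poisson_endo_def by blast
  also have "\<dots> = bracket n (Var p) (Var q)"
    using alg_endo_of_int assms unfolding poisson_endo_def bracket_Var_Var_of_int by blast
  finally show "bracket n (\<phi> (Var p)) (\<phi> (Var q)) = bracket n (Var p) (Var q)" .
qed

lemma poisson_endo_if_preserves_canonical_brackets:
  fixes \<phi> :: "'a::comm_ring_1 mpoly \<Rightarrow> 'a mpoly"
  assumes endo: "alg_endo n \<phi>" and canon: "preserves_canonical_brackets n \<phi>"
  shows "poisson_endo n \<phi>"
  unfolding poisson_endo_def
proof (intro conjI endo ballI)
  fix f g :: "'a mpoly" assume f: "f \<in> polyring (2*n)" and g: "g \<in> polyring (2*n)"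
  define a where "a p = \<phi> (pd p f)" for p
  define b where "b p = \<phi> (pd p g)" for p
  have ab: "a \<in> Evec n" "b \<in> Evec n"
    unfolding a_def b_def Evec_def using f g by (simp_all add: alg_endo_closed[OF endo] polyring_pd)
  have "bracket n (\<phi> f) (\<phi> g) = omega n (\<lambda>j. pd j (\<phi> f)) (\<lambda>j. pd j (\<phi> g))"
    unfolding bracket_def omega_def ..
  also have "\<dots> = omega n (Lphi n \<phi> a) (Lphi n \<phi> b)"
    by (rule omega_cong) (simp_all add: Lphi_def a_def b_def chain_rule[OF endo] f g)
  also have "\<dots> = omega n a b"
    using canon ab unfolding symplectic_iff_preserves_canonical_brackets[symmetric] symplectic_def
    by blast
  also have "\<dots> = \<phi> (bracket n f g)"
    unfolding omega_def bracket_def a_def b_def using f g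
    by (simp add: alg_endo_sum[OF endo] alg_endo_diff[OF endo] alg_endo_mult[OF endo]
        polyring_diff polyring_mult polyring_pd)
  finally show "bracket n (\<phi> f) (\<phi> g) = \<phi> (bracket n f g)" .
qed

lemma symplectic_iff_poisson_endo:
  "alg_endo n \<phi> \<Longrightarrow> symplectic n \<phi> \<longleftrightarrow> poisson_endo n \<phi>"
  using symplectic_iff_preserves_canonical_brackets preserves_canonical_brackets_if_poisson_endo
    poisson_endo_if_preserves_canonical_brackets by blast

section \<open>Alternating sums over pairings\<close>

(* For Y antisymmetric and independent of i this is 2^n n! times the Pfaffian of Y; letting Y
   depend on the pair index i allows the pairs to be antisymmetrized one at a time. *)
definition pairing_sum :: "nat \<Rightarrow> (nat \<Rightarrow> nat \<Rightarrow> nat \<Rightarrow> 'b::comm_ring_1) \<Rightarrow> 'b" where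
  "pairing_sum n Y = (\<Sum>\<sigma> | \<sigma> permutes {0..<2*n}. signof \<sigma> * (\<Prod>i<n. Y i (\<sigma> i) (\<sigma> (i + n))))"

lemma pairing_sum_cong:
  assumes "\<And>i a b. i < n \<Longrightarrow> a < 2*n \<Longrightarrow> b < 2*n \<Longrightarrow> Y i a b = Y' i a b"
  shows "pairing_sum n Y = pairing_sum n Y'"
  unfolding pairing_sum_def
proof (intro sum.cong refl arg_cong2[where f = "(*)"] prod.cong)
  fix \<sigma> i assume "\<sigma> \<in> {\<sigma>. \<sigma> permutes {0..<2*n}}" "i \<in> {..<n}"
  then have "i < n" "\<sigma> i < 2*n" "\<sigma> (i + n) < 2*n"
    using permutes_in_image[of \<sigma> "{0..<2*n}"] by auto
  then show "Y i (\<sigma> i) (\<sigma> (i + n)) = Y' i (\<sigma> i) (\<sigma> (i + n))" by (rule assms)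
qed

lemma prod_lessThan_fun_upd_pairs:
  fixes k n :: nat
  assumes "k < n"
  shows "(\<Prod>i<n. (Y(k := Z)) i (\<sigma> i) (\<sigma> (i + n))) =
    Z (\<sigma> k) (\<sigma> (k + n)) * (\<Prod>i\<in>{..<n} - {k}. Y i (\<sigma> i) (\<sigma> (i + n)))"
proof -
  have "(\<Prod>i<n. (Y(k := Z)) i (\<sigma> i) (\<sigma> (i + n))) =
      (Y(k := Z)) k (\<sigma> k) (\<sigma> (k + n)) * (\<Prod>i\<in>{..<n} - {k}. (Y(k := Z)) i (\<sigma> i) (\<sigma> (i + n)))"
    using assms by (intro prod.remove) auto
  also have "(\<Prod>i\<in>{..<n} - {k}. (Y(k := Z)) i (\<sigma> i) (\<sigma> (i + n))) =
      (\<Prod>i\<in>{..<n} - {k}. Y i (\<sigma> i) (\<sigma> (i + n)))"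
    by (rule prod.cong) auto
  finally show ?thesis
    by simp
qed

lemma pairing_sum_diff_at:
  assumes "k < n"
  shows "pairing_sum n (Y(k := \<lambda>a b. F a b - G a b)) =
    pairing_sum n (Y(k := F)) - pairing_sum n (Y(k := G))"
  unfolding pairing_sum_def prod_lessThan_fun_upd_pairs[OF assms]
  by (simp add: algebra_simps sum_subtractf)

lemma pairing_sum_transpose_at:
  assumes k: "k < n"
  shows "pairing_sum n (Y(k := \<lambda>a b. X b a)) = - pairing_sum n (Y(k := X))"
proof -
  define rest where "rest \<sigma> = (\<Prod>i\<in>{..<n} - {k}. Y i (\<sigma> i) (\<sigma> (i + n)))" for \<sigma> :: "nat \<Rightarrow> nat"
  define \<tau> where "\<tau> = Transposition.transpose k (k + n)"
  have \<tau>: "\<tau> permutes {0..<2*n}"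
    unfolding \<tau>_def using k by (intro permutes_swap_id) auto
  have "pairing_sum n (Y(k := \<lambda>a b. X b a)) =
      (\<Sum>\<sigma> | \<sigma> permutes {0..<2*n}. signof \<sigma> * (X (\<sigma> (k + n)) (\<sigma> k) * rest \<sigma>))"
    unfolding pairing_sum_def prod_lessThan_fun_upd_pairs[OF k] rest_def ..
  also have "\<dots> = (\<Sum>\<sigma> | \<sigma> permutes {0..<2*n}.
      signof (\<sigma> \<circ> \<tau>) * (X ((\<sigma> \<circ> \<tau>) (k + n)) ((\<sigma> \<circ> \<tau>) k) * rest (\<sigma> \<circ> \<tau>)))"
    by (rule sum_permutations_compose_right[OF \<tau>])
  also have "\<dots> = (\<Sum>\<sigma> | \<sigma> permutes {0..<2*n}. - (signof \<sigma> * (X (\<sigma> k) (\<sigma> (k + n)) * rest \<sigma>)))"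
  proof (rule sum.cong[OF refl])
    fix \<sigma> assume "\<sigma> \<in> {\<sigma>. \<sigma> permutes {0..<2*n}}"
    then have sign: "signof (\<sigma> \<circ> \<tau>) = - signof \<sigma>"
      using k signof_compose[OF _ \<tau>] by (simp add: \<tau>_def sign_swap_id)
    have rest: "rest (\<sigma> \<circ> \<tau>) = rest \<sigma>"
      unfolding rest_def \<tau>_def using k by (intro prod.cong refl) (auto simp: transpose_def)
    have "(\<sigma> \<circ> \<tau>) (k + n) = \<sigma> k" "(\<sigma> \<circ> \<tau>) k = \<sigma> (k + n)"
      by (simp_all add: \<tau>_def)
    then show "signof (\<sigma> \<circ> \<tau>) * (X ((\<sigma> \<circ> \<tau>) (k + n)) ((\<sigma> \<circ> \<tau>) k) * rest (\<sigma> \<circ> \<tau>)) =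
        - (signof \<sigma> * (X (\<sigma> k) (\<sigma> (k + n)) * rest \<sigma>))"
      unfolding sign rest by simp
  qed
  also have "\<dots> = - pairing_sum n (Y(k := X))"
    unfolding pairing_sum_def prod_lessThan_fun_upd_pairs[OF k] rest_def by (simp add: sum_negf)
  finally show ?thesis .
qed

lemma pairing_sum_antisymmetrize_at:
  assumes "k < n"
  shows "pairing_sum n (Y(k := \<lambda>a b. X a b - X b a)) = 2 * pairing_sum n (Y(k := X))"
  using pairing_sum_diff_at[OF assms, of Y X "\<lambda>a b. X b a"]
    pairing_sum_transpose_at[OF assms, of Y X]
  by simp

lemma pairing_sum_antisymmetrize:
  "pairing_sum n (\<lambda>_ a b. X a b - X b a) = 2 ^ n * pairing_sum n (\<lambda>_. X)"
proof -
  define A where "A d = (\<lambda>i. if i < d then (\<lambda>a b. X a b - X b a) else X)" for d :: nat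
  have "pairing_sum n (A d) = 2 ^ d * pairing_sum n (\<lambda>_. X)" if "d \<le> n" for d
    using that
  proof (induction d)
    case 0
    then show ?case by (simp add: A_def)
  next
    case (Suc d)
    have step: "A (Suc d) = (A d)(d := \<lambda>a b. X a b - X b a)" and keep: "(A d)(d := X) = A d"
      by (auto simp: A_def)
    have "d < n"
      using Suc.prems by simp
    have "pairing_sum n (A (Suc d)) = 2 * pairing_sum n (A d)"
      using pairing_sum_antisymmetrize_at[OF \<open>d < n\<close>, of "A d" X] unfolding step keep .
    with Suc show ?case
      by simp
  qed
  moreover have "pairing_sum n (A n) = pairing_sum n (\<lambda>_ a b. X a b - X b a)"
    by (rule pairing_sum_cong) (simp add: A_def)
  ultimately show ?thesis
    by (metis order_refl)
qed

definition self_maps :: "nat \<Rightarrow> (nat \<Rightarrow> nat) set" where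
  "self_maps n = {f. (\<forall>i\<in>{0..<n}. f i \<in> {0..<n}) \<and> (\<forall>i. i \<notin> {0..<n} \<longrightarrow> f i = i)}"

lemma finite_self_maps: "finite (self_maps n)"
  unfolding self_maps_def by (rule finite_bounded_functions) auto

lemma permutes_subset_self_maps: "{p. p permutes {0..<n}} \<subseteq> self_maps n"
  unfolding self_maps_def using permutes_in_image permutes_not_in by fastforce

lemma prod_sum_eq_sum_self_maps:
  fixes h :: "nat \<Rightarrow> nat \<Rightarrow> 'a::comm_semiring_1"
  shows "(\<Prod>i<n. \<Sum>c<n. h i c) = (\<Sum>f\<in>self_maps n. \<Prod>i<n. h i (f i))"
proof -
  have "(\<Prod>i<n. \<Sum>c<n. h i c) = (\<Sum>f\<in>PiE {..<n} (\<lambda>_. {..<n}). \<Prod>i<n. h i (f i))"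
    by (rule prod_sum_PiE) auto
  also have "\<dots> = (\<Sum>f\<in>self_maps n. \<Prod>i<n. h i (f i))"
  proof (rule sum.reindex_bij_witness[where i = "\<lambda>f. restrict f {..<n}"
        and j = "\<lambda>f k. if k < n then f k else k"])
    fix f assume f: "f \<in> PiE {..<n} (\<lambda>_. {..<n})"
    show "restrict (\<lambda>k. if k < n then f k else k) {..<n} = f"
      using PiE_arb[OF f] by (auto simp: restrict_def)
    have "f k < n" if "k < n" for k
      using f that by auto
    then show "(\<lambda>k. if k < n then f k else k) \<in> self_maps n"
      unfolding self_maps_def by auto
    show "(\<Prod>i<n. h i (if i < n then f i else i)) = (\<Prod>i<n. h i (f i))"
      by simp
  next
    fix f assume "f \<in> self_maps n"
    then show "(\<lambda>k. if k < n then restrict f {..<n} k else k) = f"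
      and "restrict f {..<n} \<in> PiE {..<n} (\<lambda>_. {..<n})"
      unfolding self_maps_def by auto
  qed
  finally show ?thesis .
qed

lemma prod_atLeast0LessThan_double:
  fixes h :: "nat \<Rightarrow> 'a::comm_monoid_mult"
  shows "(\<Prod>k\<in>{0..<2*n}. h k) = (\<Prod>i<n. h i * h (i + n))"
proof -
  have "(\<Prod>k\<in>{0..<2*n}. h k) = (\<Prod>k\<in>{0..<n}. h k) * (\<Prod>k\<in>{n..<n+n}. h k)"
    by (simp add: prod.atLeastLessThan_concat mult_2)
  also have "(\<Prod>k\<in>{n..<n+n}. h k) = (\<Prod>k\<in>{0..<n}. h (k + n))"
    using prod.shift_bounds_nat_ivl[of h 0 n n] by simp
  finally show ?thesis by (simp add: atLeast0LessThan prod.distrib)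
qed

lemma det_reindex_cols_eq_sum:
  assumes "A \<in> carrier_mat m m"
  shows "det (mat m m (\<lambda>(i, j). A $$ (i, g j))) =
    (\<Sum>\<sigma> | \<sigma> permutes {0..<m}. signof \<sigma> * (\<Prod>k\<in>{0..<m}. A $$ (\<sigma> k, g k)))"
proof -
  let ?M = "mat m m (\<lambda>(i, j). A $$ (i, g j))"
  have "det ?M = det (transpose_mat ?M)"
    by (simp add: det_transpose[of _ m])
  also have "\<dots> = (\<Sum>\<sigma> | \<sigma> permutes {0..<m}. signof \<sigma> * (\<Prod>k\<in>{0..<m}. transpose_mat ?M $$ (k, \<sigma> k)))"
    by (rule det_def') simp
  also have "\<dots> = (\<Sum>\<sigma> | \<sigma> permutes {0..<m}. signof \<sigma> * (\<Prod>k\<in>{0..<m}. A $$ (\<sigma> k, g k)))"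
  proof (intro sum.cong refl arg_cong2[where f = "(*)"] prod.cong)
    fix \<sigma> k assume "\<sigma> \<in> {\<sigma>. \<sigma> permutes {0..<m}}" "k \<in> {0..<m}"
    then have "\<sigma> k < m" "k < m" using permutes_in_image by fastforce+
    then show "transpose_mat ?M $$ (k, \<sigma> k) = A $$ (\<sigma> k, g k)" by simp
  qed
  finally show ?thesis .
qed

lemma det_reindex_cols_eq_0:
  assumes "i \<noteq> j" "i < m" "j < m" "g i = g j"
  shows "det (mat m m (\<lambda>(i, j). A $$ (i, g j))) = 0"
  by (rule det_identical_columns[of _ m i j]) (use assms in \<open>auto intro!: eq_vecI\<close>)

lemma det_permute_cols:
  assumes A: "A \<in> carrier_mat m m" and g: "g permutes {0..<m}"
  shows "det (mat m m (\<lambda>(i, j). A $$ (i, g j))) = signof g * det A"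
proof -
  have "mat m m (\<lambda>(i, j). A $$ (i, g j)) =
      transpose_mat (mat m m (\<lambda>(i, j). transpose_mat A $$ (g i, j)))"
    using A permutes_in_image[OF g] by (intro eq_matI) auto
  then show ?thesis
    using A g by (simp add: det_transpose[of _ m] det_permute_rows)
qed

definition swap_halves :: "nat \<Rightarrow> nat \<Rightarrow> nat" where
  "swap_halves n k = (if k < n then k + n else if k < 2*n then k - n else k)"

lemma permutes_swap_halves: "swap_halves n permutes {0..<2*n}"
proof -
  have "swap_halves n (swap_halves n k) = k" for k
    unfolding swap_halves_def by auto
  then have "bij (swap_halves n)"
    by (metis bijI' )
  then show ?thesis
    unfolding permutes_def swap_halves_def by (auto simp: bij_iff)
qed

definition double_map :: "nat \<Rightarrow> (nat \<Rightarrow> nat) \<Rightarrow> nat \<Rightarrow> nat" where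
  "double_map n f k = (if k < n then f k else if k < 2*n then f (k - n) + n else k)"

lemma double_map_eq_comp_conj:
  assumes "p permutes {0..<n}"
  shows "double_map n p = p \<circ> (swap_halves n \<circ> p \<circ> swap_halves n)"
proof
  fix k
  have outside: "p k = k" if "k \<ge> n" for k
    using assms that permutes_not_in by fastforce
  have inside: "p k < n" if "k < n" for k
    using assms that permutes_in_image by fastforce
  consider "k < n" | "n \<le> k" "k < 2*n" | "2*n \<le> k"
    by linarith
  then show "double_map n p k = (p \<circ> (swap_halves n \<circ> p \<circ> swap_halves n)) k"
  proof cases
    case 1
    then show ?thesis
      using outside[of "k + n"] inside[of k] by (simp add: double_map_def swap_halves_def)
  next
    case 2
    then show ?thesis
      using outside[of "p (k - n) + n"] inside[of "k - n"]
      by (simp add: double_map_def swap_halves_def)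
  next
    case 3
    then show ?thesis
      using outside[of k] by (simp add: double_map_def swap_halves_def)
  qed
qed

lemma
  assumes "p permutes {0..<n}"
  shows permutes_double_map: "double_map n p permutes {0..<2*n}"
    and sign_double_map: "sign (double_map n p) = 1"
proof -
  have p: "p permutes {0..<2*n}"
    using assms by (rule permutes_subset) auto
  have conj: "swap_halves n \<circ> p \<circ> swap_halves n permutes {0..<2*n}"
    by (intro permutes_compose p permutes_swap_halves)
  show "double_map n p permutes {0..<2*n}"
    unfolding double_map_eq_comp_conj[OF assms] by (intro permutes_compose conj p)
  have perm: "permutation q" if "q permutes {0..<2*n}" for q
    using that permutation_permutes by blast
  have "sign (double_map n p) = sign p * (sign (swap_halves n) * sign p * sign (swap_halves n))"
    unfolding double_map_eq_comp_conj[OF assms]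
    by (simp add: sign_compose perm p conj permutes_swap_halves permutes_compose)
  also have "\<dots> = (sign p * sign p) * (sign (swap_halves n) * sign (swap_halves n))"
    by (simp only: ac_simps)
  also have "\<dots> = 1"
    by simp
  finally show "sign (double_map n p) = 1" .
qed

lemma sum_self_maps_det_double_map:
  assumes A: "A \<in> carrier_mat (2*n) (2*n)"
  shows "(\<Sum>f\<in>self_maps n. det (mat (2*n) (2*n) (\<lambda>(i, j). A $$ (i, double_map n f j)))) =
    of_nat (fact n) * det A"
proof -
  let ?H = "\<lambda>f. det (mat (2*n) (2*n) (\<lambda>(i, j). A $$ (i, double_map n f j)))"
  let ?P = "{p. p permutes {0..<n}}"
  have "?H f = 0" if f: "f \<in> self_maps n - ?P" for f
  proof -
    have "\<not> inj_on f {0..<n}"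
      using f inj_on_nat_permutes[of f "{0..<n}"] unfolding self_maps_def by auto
    then obtain i j where "i < n" "j < n" "i \<noteq> j" "f i = f j"
      unfolding inj_on_def by auto
    then show ?thesis
      by (intro det_reindex_cols_eq_0[of i j]) (auto simp: double_map_def)
  qed
  moreover have "?H p = det A" if "p \<in> ?P" for p
    using that A by (simp add: det_permute_cols permutes_double_map sign_double_map)
  ultimately have "(\<Sum>f\<in>self_maps n. ?H f) = (\<Sum>p\<in>?P. det A)"
    using sum.subset_diff[OF permutes_subset_self_maps finite_self_maps, of ?H] by simp
  then show ?thesis
    by (simp add: card_permutations)
qed

(* Expanding the product gives one determinant of A with columns reindexed by double_map n f for
   each self-map f of {0..<n}; it vanishes unless f is a permutation, and then double_map n f
   is an even permutation. *)
lemma pairing_sum_congruence: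
  assumes A: "A \<in> carrier_mat (2*n) (2*n)"
  shows "pairing_sum n (\<lambda>_ a b. \<Sum>c<n. A $$ (a, c) * A $$ (b, c + n)) = of_nat (fact n) * det A"
proof -
  let ?P = "{\<sigma>. \<sigma> permutes {0..<2*n}}"
  have "pairing_sum n (\<lambda>_ a b. \<Sum>c<n. A $$ (a, c) * A $$ (b, c + n)) =
      (\<Sum>\<sigma>\<in>?P. signof \<sigma> * (\<Sum>f\<in>self_maps n. \<Prod>i<n. A $$ (\<sigma> i, f i) * A $$ (\<sigma> (i + n), f i + n)))"
    unfolding pairing_sum_def prod_sum_eq_sum_self_maps ..
  also have "\<dots> = (\<Sum>\<sigma>\<in>?P. signof \<sigma> * (\<Sum>f\<in>self_maps n. \<Prod>k\<in>{0..<2*n}. A $$ (\<sigma> k, double_map n f k)))"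
    by (simp add: prod_atLeast0LessThan_double double_map_def)
  also have "\<dots> = (\<Sum>f\<in>self_maps n. \<Sum>\<sigma>\<in>?P. signof \<sigma> * (\<Prod>k\<in>{0..<2*n}. A $$ (\<sigma> k, double_map n f k)))"
    by (simp add: sum_distrib_left sum.swap[where A = ?P])
  also have "\<dots> = (\<Sum>f\<in>self_maps n. det (mat (2*n) (2*n) (\<lambda>(i, j). A $$ (i, double_map n f j))))"
    using A by (simp add: det_reindex_cols_eq_sum)
  also have "\<dots> = of_nat (fact n) * det A"
    by (rule sum_self_maps_det_double_map[OF A])
  finally show ?thesis .
qed

section \<open>The Jacobian determinant\<close>

lemma jac_carrier: "jac n \<psi> \<in> carrier_mat (2*n) (2*n)"
  unfolding jac_def by simp

lemma jac_id: "jac n (\<lambda>f. f) = (1\<^sub>m (2*n) :: 'a::comm_ring_1 mpoly mat)"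
  unfolding jac_def by (intro eq_matI) (auto simp: pd_Var)

lemma bracket_Var_eq_jac:
  assumes "a < 2*n" "b < 2*n"
  shows "bracket n (\<psi> (Var a)) (\<psi> (Var b)) =
    (\<Sum>c<n. jac n \<psi> $$ (a, c) * jac n \<psi> $$ (b, c + n)) -
    (\<Sum>c<n. jac n \<psi> $$ (b, c) * jac n \<psi> $$ (a, c + n))"
  unfolding bracket_def jac_def using assms by (simp add: sum_subtractf mult.commute)

lemma pairing_sum_brackets:
  "pairing_sum n (\<lambda>_ a b. bracket n (\<psi> (Var a)) (\<psi> (Var b))) =
    2 ^ n * of_nat (fact n) * det (jac n \<psi>)"
proof -
  let ?x = "\<lambda>a b. \<Sum>c<n. jac n \<psi> $$ (a, c) * jac n \<psi> $$ (b, c + n)"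
  have "pairing_sum n (\<lambda>_ a b. bracket n (\<psi> (Var a)) (\<psi> (Var b))) =
      pairing_sum n (\<lambda>_ a b. ?x a b - ?x b a)"
    by (rule pairing_sum_cong) (simp add: bracket_Var_eq_jac)
  also have "\<dots> = 2 ^ n * pairing_sum n (\<lambda>_. ?x)"
    by (rule pairing_sum_antisymmetrize)
  also have "\<dots> = 2 ^ n * of_nat (fact n) * det (jac n \<psi>)"
    by (simp add: pairing_sum_congruence jac_carrier)
  finally show ?thesis .
qed

lemma two_pow_fact_mult_det_jac:
  fixes \<phi> :: "'a::comm_ring_1 mpoly \<Rightarrow> 'a mpoly"
  assumes "preserves_canonical_brackets n \<phi>"
  shows "2 ^ n * of_nat (fact n) * det (jac n \<phi>) = 2 ^ n * of_nat (fact n)"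
proof -
  have "2 ^ n * of_nat (fact n) * det (jac n \<phi>) =
      pairing_sum n (\<lambda>_ a b. bracket n (\<phi> (Var a)) (\<phi> (Var b)))"
    by (simp add: pairing_sum_brackets)
  also have "\<dots> = pairing_sum n (\<lambda>_ a b. bracket n (Var a) (Var b))"
    using assms unfolding preserves_canonical_brackets_def by (intro pairing_sum_cong) simp
  also have "\<dots> = 2 ^ n * of_nat (fact n) * det (jac n (\<lambda>f. f))"
    using pairing_sum_brackets[of n "\<lambda>f. f"] by simp
  also have "\<dots> = 2 ^ n * of_nat (fact n)"
    by (simp add: jac_id)
  finally show ?thesis .
qed

lemma det_2:
  assumes "A \<in> carrier_mat 2 2"
  shows "det A = A $$ (0, 0) * A $$ (1, 1) - A $$ (1, 0) * A $$ (0, 1)"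
proof -
  have "det A = (\<Sum>i<2. A $$ (i, 0) * cofactor A i 0)"
    by (rule laplace_expansion_column[OF assms]) simp
  also have "\<dots> = A $$ (0, 0) * cofactor A 0 0 + A $$ (1, 0) * cofactor A 1 0"
    by (simp add: numeral_2_eq_2)
  also have "cofactor A 0 0 = A $$ (1, 1)"
    unfolding cofactor_def using assms by (subst det_single) (auto simp: mat_delete_def)
  also have "cofactor A 1 0 = - A $$ (0, 1)"
    unfolding cofactor_def using assms by (subst det_single) (auto simp: mat_delete_def)
  finally show ?thesis by simp
qed

lemma det_jac_1: "det (jac 1 \<psi>) = bracket 1 (\<psi> (Var 0)) (\<psi> (Var 1))"
  using det_2[of "jac 1 \<psi>"] by (simp add: jac_def bracket_def mult.commute)

lemma two_pow_mult_fact_dvd_one: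
  assumes unit: "of_nat (fact n) dvd (1 :: 'b::comm_semiring_1)" and n: "2 \<le> n"
  shows "2 ^ n * of_nat (fact n) dvd (1 :: 'b)"
proof -
  obtain k :: nat where "fact n = 2 * k"
    using n dvd_fact[of 2 n] by (auto elim: dvdE)
  then have "(2 :: 'b) dvd of_nat (fact n)"
    by simp
  then have "(2 :: 'b) ^ n dvd 1"
    using unit dvd_trans dvd_power_same[of "2 :: 'b" 1 n] by (metis power_one)
  then show ?thesis
    using unit mult_dvd_mono by fastforce
qed

lemma Const_dvd_one: "c dvd 1 \<Longrightarrow> Const c dvd 1"
  unfolding Const_def by (metis dvd_def mult_single add_0 single_one)

lemma eq_one_if_unit_mult_eq_self:
  assumes "a dvd (1 :: 'b::comm_semiring_1)" "a * d = a"
  shows "d = 1"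
proof -
  obtain w where w: "1 = a * w"
    using assms(1) by (rule dvdE)
  have "d = (a * w) * d"
    using w by simp
  also have "\<dots> = w * (a * d)"
    by (simp only: ac_simps)
  also have "\<dots> = 1"
    using w assms(2) by (simp add: mult.commute)
  finally show ?thesis .
qed

lemma det_jac_eq_1:
  fixes \<phi> :: "'a::comm_ring_1 mpoly \<Rightarrow> 'a mpoly"
  assumes canon: "preserves_canonical_brackets n \<phi>"
    and n: "n \<ge> 1" and unit: "of_nat (fact n) dvd (1 :: 'a)"
  shows "det (jac n \<phi>) = 1"
proof (cases "n = 1")
  case True
  \<comment> \<open>Here 2 need not be a unit, but det J is itself a bracket.\<close>
  have "bracket n (\<phi> (Var 0)) (\<phi> (Var 1)) = bracket n (Var 0) (Var 1)"
    using canon n unfolding preserves_canonical_brackets_def by simp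
  then have "det (jac 1 \<phi>) = bracket 1 (Var 0) (Var 1)"
    using True det_jac_1[of \<phi>] by simp
  also have "\<dots> = 1"
    by (simp add: bracket_def pd_Var)
  finally show ?thesis
    using True by simp
next
  case False
  have "of_nat (fact n) dvd (1 :: 'a mpoly)"
    using Const_dvd_one[OF unit] by (simp add: Const_def)
  then have "2 ^ n * of_nat (fact n) dvd (1 :: 'a mpoly)"
    using False n by (intro two_pow_mult_fact_dvd_one) auto
  moreover have "2 ^ n * of_nat (fact n) * det (jac n \<phi>) = 2 ^ n * of_nat (fact n)"
    using canon by (rule two_pow_fact_mult_det_jac)
  ultimately show ?thesis
    by (rule eq_one_if_unit_mult_eq_self)
qed

theorem theorem1:
  fixes \<phi> :: "('a::comm_ring_1) mpoly \<Rightarrow> 'a mpoly" and n :: nat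
  assumes "n \<ge> 1"
    and "alg_endo n \<phi>"
  shows "(symplectic n \<phi> \<longleftrightarrow> poisson_endo n \<phi>) \<and>
         ((symplectic n \<phi> \<or> poisson_endo n \<phi>) \<and> (\<exists>u::'a. of_nat (fact n) * u = 1)
            \<longrightarrow> det (jac n \<phi>) = 1)"
proof -
  have equiv: "symplectic n \<phi> \<longleftrightarrow> poisson_endo n \<phi>"
    using assms(2) by (rule symplectic_iff_poisson_endo)
  have "det (jac n \<phi>) = 1" if "symplectic n \<phi>" and "of_nat (fact n) * u = (1::'a)" for u
    using det_jac_eq_1[OF _ assms(1)] that
    by (metis dvdI symplectic_iff_preserves_canonical_brackets)
  with equiv show ?thesis by blast
qed

end
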